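(* Let $\mathcal{M}=(S,E,T)$ be a trivially parametric Markov chain satisfying the standing assumptions below, let $s\in S$ and let $A\subseteq S$ be a never-worse equivalence class. If $s$ almost-surely reaches $A$, then $s\in A$.
   Context: A trivially parametric Markov chain $\mathcal{M}=(S,E,T)$ consists of a finite set of states $S$, targets $T=\{\mathit{fin},\mathit{fail}\}$ with no outgoing edges, and edges $E\subseteq(S\setminus T)\times S$. A graph-preserving valuation assigns to each non-target $s$ a full-support probability distribution on its successor set $sE$; write $P_{\mathsf{val}}(s)$ for the probability of reaching $\mathit{fin}$ from $s$ in the resulting Markov chain. For $s,s'\in S$, $s\sim s'$ (never-worse equivalent) iff $P_{\mathsf{val}}(s)=P_{\mathsf{val}}(s')$ for every graph-preserving valuation; equivalence classes are the classes of $\sim$. $s$ almost-surely reaches $A$ if the probability of reaching $A$ from $s$ is $1$ for every graph-preserving valuation. Standing assumptions: the equivalence classes of $\mathit{fin}$ and $\mathit{fail}$ are $\{\mathit{fin}\}$ and $\{\mathit{fail}\}$; no state has a self-loop; every non-target state has at least two successors. *)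

theory Defs
  imports Complex_Main
begin

definition succs :: "('a \<times> 'a) set \<Rightarrow> 'a \<Rightarrow> 'a set" where
  "succs E s = {t. (s, t) \<in> E}"

text \<open>A graph-preserving valuation: every non-target state gets a full-support
probability distribution on its successor set (values outside E are irrelevant).\<close>
definition graph_preserving ::
  "'a set \<Rightarrow> ('a \<times> 'a) set \<Rightarrow> 'a set \<Rightarrow> ('a \<Rightarrow> 'a \<Rightarrow> real) \<Rightarrow> bool" where
  "graph_preserving S E T val \<longleftrightarrow>
     (\<forall>s \<in> S - T. (\<forall>t \<in> succs E s. 0 < val s t) \<and> (\<Sum>t \<in> succs E s. val s t) = 1)"

fun reach_within :: "('a \<times> 'a) set \<Rightarrow> ('a \<Rightarrow> 'a \<Rightarrow> real) \<Rightarrow> 'a set \<Rightarrow> nat \<Rightarrow> 'a \<Rightarrow> real" where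
  "reach_within E val A 0 s = (if s \<in> A then 1 else 0)"
| "reach_within E val A (Suc n) s =
     (if s \<in> A then 1 else (\<Sum>t \<in> succs E s. val s t * reach_within E val A n t))"

definition reach_prob :: "('a \<times> 'a) set \<Rightarrow> ('a \<Rightarrow> 'a \<Rightarrow> real) \<Rightarrow> 'a set \<Rightarrow> 'a \<Rightarrow> real" where
  "reach_prob E val A s = (SUP n. reach_within E val A n s)"

definition P_val :: "('a \<times> 'a) set \<Rightarrow> ('a \<Rightarrow> 'a \<Rightarrow> real) \<Rightarrow> 'a \<Rightarrow> 'a \<Rightarrow> real" where
  "P_val E val fin s = reach_prob E val {fin} s"

definition never_worse_equiv ::
  "'a set \<Rightarrow> ('a \<times> 'a) set \<Rightarrow> 'a \<Rightarrow> 'a \<Rightarrow> 'a \<Rightarrow> 'a \<Rightarrow> bool" where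
  "never_worse_equiv S E fin fail s s' \<longleftrightarrow>
     (\<forall>val. graph_preserving S E {fin, fail} val \<longrightarrow> P_val E val fin s = P_val E val fin s')"

definition equiv_class :: "'a set \<Rightarrow> ('a \<times> 'a) set \<Rightarrow> 'a \<Rightarrow> 'a \<Rightarrow> 'a \<Rightarrow> 'a set" where
  "equiv_class S E fin fail s = {s' \<in> S. never_worse_equiv S E fin fail s s'}"

definition is_equiv_class :: "'a set \<Rightarrow> ('a \<times> 'a) set \<Rightarrow> 'a \<Rightarrow> 'a \<Rightarrow> 'a set \<Rightarrow> bool" where
  "is_equiv_class S E fin fail A \<longleftrightarrow> (\<exists>s \<in> S. A = equiv_class S E fin fail s)"

definition almost_surely_reaches ::
  "'a set \<Rightarrow> ('a \<times> 'a) set \<Rightarrow> 'a \<Rightarrow> 'a \<Rightarrow> 'a \<Rightarrow> 'a set \<Rightarrow> bool" where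
  "almost_surely_reaches S E fin fail s A \<longleftrightarrow>
     (\<forall>val. graph_preserving S E {fin, fail} val \<longrightarrow> reach_prob E val A s = 1)"

definition tpmc :: "'a set \<Rightarrow> ('a \<times> 'a) set \<Rightarrow> 'a \<Rightarrow> 'a \<Rightarrow> bool" where
  "tpmc S E fin fail \<longleftrightarrow>
     finite S \<and> fin \<in> S \<and> fail \<in> S \<and> fin \<noteq> fail \<and>
     E \<subseteq> (S - {fin, fail}) \<times> S"

definition standing_assumptions :: "'a set \<Rightarrow> ('a \<times> 'a) set \<Rightarrow> 'a \<Rightarrow> 'a \<Rightarrow> bool" where
  "standing_assumptions S E fin fail \<longleftrightarrow>
     equiv_class S E fin fail fin = {fin} \<and>
     equiv_class S E fin fail fail = {fail} \<and>
     (\<forall>s \<in> S. (s, s) \<notin> E) \<and>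
     (\<forall>s \<in> S - {fin, fail}. 2 \<le> card (succs E s))"

end

theory Submission
  imports Defs
begin

text \<open>Fix a valuation and let p be the value of P_val on the class A. Both P_val and
1 - P_val are nonnegative and harmonic (equal to their one-step average) outside
A \<union> {fin, fail}, and constant on A with values p and 1 - p. A nonnegative function
that is harmonic outside A and equal to c on A is bounded below by c times the
probability of reaching A. If s reaches A almost surely, this yields p \<le> P_val s and
1 - p \<le> 1 - P_val s, so s is never-worse equivalent to the members of A.\<close>

locale valued_chain =
  fixes S :: "'a set" and E :: "('a \<times> 'a) set" and T :: "'a set" and val :: "'a \<Rightarrow> 'a \<Rightarrow> real"
  assumes edges_subset: "E \<subseteq> (S - T) \<times> S"
    and graph_preserving: "graph_preserving S E T val"
begin

lemma succs_empty: "x \<notin> S - T \<Longrightarrow> succs E x = {}"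
  using edges_subset unfolding succs_def by auto

lemma val_pos: "t \<in> succs E x \<Longrightarrow> 0 < val x t"
  using graph_preserving succs_empty unfolding graph_preserving_def by blast

lemma sum_val: "x \<in> S - T \<Longrightarrow> (\<Sum>t\<in>succs E x. val x t) = 1"
  using graph_preserving unfolding graph_preserving_def by blast

lemma sum_val_le_one: "(\<Sum>t\<in>succs E x. val x t) \<le> 1"
  by (cases "x \<in> S - T") (simp_all add: sum_val succs_empty)

lemma reach_within_bounds: "0 \<le> reach_within E val B n x \<and> reach_within E val B n x \<le> 1"
proof (induction n arbitrary: x)
  case 0
  show ?case by simp
next
  case (Suc n)
  have "0 \<le> (\<Sum>t\<in>succs E x. val x t * reach_within E val B n t)"
    using Suc.IH val_pos by (intro sum_nonneg) (simp add: less_imp_le)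
  moreover have "(\<Sum>t\<in>succs E x. val x t * reach_within E val B n t) \<le> (\<Sum>t\<in>succs E x. val x t)"
    using Suc.IH val_pos by (intro sum_mono) (simp add: less_imp_le mult_left_le)
  ultimately show ?case
    using sum_val_le_one[of x] by simp
qed

lemma incseq_reach_within: "incseq (\<lambda>n. reach_within E val B n x)"
proof (rule incseq_SucI)
  show "reach_within E val B n x \<le> reach_within E val B (Suc n) x" for n
  proof (induction n arbitrary: x)
    case 0
    have "0 \<le> reach_within E val B (Suc 0) x"
      using reach_within_bounds by blast
    then show ?case by (cases "x \<in> B") auto
  next
    case (Suc n)
    have "(\<Sum>t\<in>succs E x. val x t * reach_within E val B n t)
        \<le> (\<Sum>t\<in>succs E x. val x t * reach_within E val B (Suc n) t)"
      using Suc.IH val_pos by (intro sum_mono) (simp add: less_imp_le mult_left_mono)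
    then show ?case by simp
  qed
qed

lemma reach_within_tendsto: "(\<lambda>n. reach_within E val B n x) \<longlonglongrightarrow> reach_prob E val B x"
  unfolding reach_prob_def
proof (rule LIMSEQ_incseq_SUP)
  show "bdd_above (range (\<lambda>n. reach_within E val B n x))"
    using reach_within_bounds by (intro bdd_aboveI[of _ 1]) blast
qed (rule incseq_reach_within)

lemma reach_prob_bounds: "0 \<le> reach_prob E val B x \<and> reach_prob E val B x \<le> 1"
  using LIMSEQ_le_const[OF reach_within_tendsto] LIMSEQ_le_const2[OF reach_within_tendsto]
    reach_within_bounds by meson

lemma reach_prob_unfold:
  assumes "x \<notin> B"
  shows "reach_prob E val B x = (\<Sum>t\<in>succs E x. val x t * reach_prob E val B t)"
proof (rule LIMSEQ_unique)
  show "(\<lambda>n. reach_within E val B (Suc n) x) \<longlonglongrightarrow> reach_prob E val B x"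
    using reach_within_tendsto by (rule LIMSEQ_Suc)
  show "(\<lambda>n. reach_within E val B (Suc n) x) \<longlonglongrightarrow> (\<Sum>t\<in>succs E x. val x t * reach_prob E val B t)"
    using assms by (simp add: tendsto_sum tendsto_mult_left reach_within_tendsto)
qed

lemma one_minus_reach_prob_unfold:
  assumes "x \<in> S - T" and "x \<notin> B"
  shows "1 - reach_prob E val B x = (\<Sum>t\<in>succs E x. val x t * (1 - reach_prob E val B t))"
proof -
  have "1 - reach_prob E val B x
      = (\<Sum>t\<in>succs E x. val x t) - (\<Sum>t\<in>succs E x. val x t * reach_prob E val B t)"
    using assms by (simp add: sum_val reach_prob_unfold)
  also have "\<dots> = (\<Sum>t\<in>succs E x. val x t * (1 - reach_prob E val B t))"
    by (simp add: sum_subtractf right_diff_distrib)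
  finally show ?thesis .
qed

lemma reach_within_lower_bound:
  assumes on_A: "\<And>x. x \<in> A \<Longrightarrow> f x = c"
    and nonneg: "\<And>x. 0 \<le> f x"
    and harmonic: "\<And>x. x \<in> S - T \<Longrightarrow> x \<notin> A \<Longrightarrow> f x = (\<Sum>t\<in>succs E x. val x t * f t)"
  shows "c * reach_within E val A n x \<le> f x"
proof (induction n arbitrary: x)
  case 0
  show ?case using on_A nonneg by simp
next
  case (Suc n)
  show ?case
  proof (cases "x \<in> A")
    case True
    then show ?thesis using on_A by simp
  next
    case x_notin_A: False
    have "c * reach_within E val A (Suc n) x = (\<Sum>t\<in>succs E x. val x t * (c * reach_within E val A n t))"
      using x_notin_A by (simp add: sum_distrib_left mult.left_commute)
    also have "\<dots> \<le> (\<Sum>t\<in>succs E x. val x t * f t)"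
      using Suc.IH val_pos by (intro sum_mono) (simp add: less_imp_le mult_left_mono)
    also have "\<dots> \<le> f x"
      using harmonic[OF _ x_notin_A] nonneg succs_empty by (cases "x \<in> S - T") auto
    finally show ?thesis .
  qed
qed

lemma reach_prob_lower_bound:
  assumes "\<And>x. x \<in> A \<Longrightarrow> f x = c"
    and "\<And>x. 0 \<le> f x"
    and "\<And>x. x \<in> S - T \<Longrightarrow> x \<notin> A \<Longrightarrow> f x = (\<Sum>t\<in>succs E x. val x t * f t)"
  shows "c * reach_prob E val A x \<le> f x"
  using reach_within_lower_bound[OF assms]
  by (intro LIMSEQ_le_const2[OF tendsto_mult_left[OF reach_within_tendsto]]) blast

end

theorem lemma14:
  fixes S :: "'a set" and E :: "('a \<times> 'a) set" and fin fail s :: 'a and A :: "'a set"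
  assumes "tpmc S E fin fail"
    and "standing_assumptions S E fin fail"
    and "s \<in> S"
    and "is_equiv_class S E fin fail A"
    and "almost_surely_reaches S E fin fail s A"
  shows "s \<in> A"
proof -
  obtain a where a: "a \<in> S" "A = equiv_class S E fin fail a"
    using assms(4) unfolding is_equiv_class_def by blast
  have "P_val E val fin a = P_val E val fin s" if gp: "graph_preserving S E {fin, fail} val" for val
  proof -
    interpret valued_chain S E "{fin, fail}" val
      using assms(1) gp by unfold_locales (auto simp: tpmc_def)
    let ?P = "P_val E val fin" and ?p = "P_val E val fin a"
    have on_A: "?P x = ?p" if "x \<in> A" for x
      using a gp that unfolding equiv_class_def never_worse_equiv_def by auto
    have reach_A: "reach_prob E val A s = 1"
      using assms(5) gp unfolding almost_surely_reaches_def by blast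
    have "?p * reach_prob E val A s \<le> ?P s"
      using on_A reach_prob_bounds reach_prob_unfold
      by (intro reach_prob_lower_bound) (auto simp: P_val_def)
    moreover have "(1 - ?p) * reach_prob E val A s \<le> 1 - ?P s"
      using on_A reach_prob_bounds one_minus_reach_prob_unfold
      by (intro reach_prob_lower_bound) (auto simp: P_val_def)
    ultimately show ?thesis
      using reach_A by simp
  qed
  then show ?thesis
    using a assms(3) unfolding equiv_class_def never_worse_equiv_def by simp
qed

end
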